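(* Work in units with $8\pi G=1$, $c=1$, metric signature $(+,-,-,-)$. Let $\rho(z)$, $p(z)$, $\delta p(z)$ be real functions defined on a neighbourhood of $z=0$ and let $z_1<z_2$ be real constants. Define $$\phi(z)=\int_0^z dw\,\frac{w-z_2}{w-z_1}\,\frac{p(w)}{(w-z_1)\,(\rho(w)-p(w))+(z_2-z_1)\,(\rho(w)+7p(w)-4\,\delta p(w))},$$ and assume that $\phi'$ is continuous and nonzero on a neighbourhood of $z=0$ (so in particular $p\neq 0$ near $z=0$), and that $z_1\,p_0<0$, where $p_0=p(0)$. On a neighbourhood of $z=0$ consider, in coordinates $(t,x,y,z)$, the metric $$ds^2=e^{2\phi}\,dt^2-e^{4(z_2-z_1)\int_0^z dw\,\frac{\phi'(w)}{w-z_2}}\,(dx^2+dy^2)-\frac{4(z_2-z_1)(z-z_1)}{(z-z_2)^2}\,\frac{(\phi')^2}{p}\,dz^2,$$ and the energy-momentum tensor $(T^\mu{}_\nu)=\mathrm{diag}\{\rho,\,-p_{\parallel},\,-p_{\parallel},\,-p\}$ with $p_{\parallel}=p-\delta p$. Suppose that $\rho,p,\delta p$ satisfy $$\frac{dp}{dz}=-\left(\frac{(z-z_2)(\rho+p)+4(z_2-z_1)\,\delta p}{(z-z_1)(\rho-p)+(z_2-z_1)(\rho+7p-4\,\delta p)}\right)\frac{p}{z-z_1}$$ (equivalently, $\nabla_\mu T^\mu{}_\nu=0$ for this metric). Then the Einstein equations $R^\mu{}_\nu-\tfrac12 R\,\delta^\mu{}_\nu=T^\mu{}_\nu$ hold on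 a neighbourhood of $z=0$.
   Context: Curvature sign conventions: Christoffel symbols of the Levi-Civita connection $\Gamma^\lambda_{\mu\nu}$; the Ricci tensor is $R_{\mu\nu}=\partial_\lambda\Gamma^\lambda_{\mu\nu}-\partial_\nu\Gamma^\lambda_{\mu\lambda}+\Gamma^\lambda_{\mu\nu}\Gamma^\sigma_{\lambda\sigma}-\Gamma^\sigma_{\mu\lambda}\Gamma^\lambda_{\nu\sigma}$ (Landau–Lifshitz conventions), $R^\mu{}_\nu=g^{\mu\alpha}R_{\alpha\nu}$, $R=R^\mu{}_\mu$. Here $\rho$ is the energy density, $p$ the pressure orthogonal to the planes of symmetry, $p_\parallel$ the pressure parallel to them, and $\delta p=p-p_\parallel$ the pressure difference. Note that $-g_{zz}>0$ near $z=0$ because $z_1p_0<0$ and $z_2>z_1$. *)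

theory Defs
  imports "HOL-Analysis.Analysis"
begin

text \<open>Coordinates (t,x,y,z) are indexed by the four elements 0,1,2,3 of the type 4.
  A metric is a function from spacetime points (real^4) to 4x4 matrices g_{mu nu}.\<close>

definition pd :: "(real^4 \<Rightarrow> real) \<Rightarrow> 4 \<Rightarrow> real^4 \<Rightarrow> real" where
  "pd f k X = deriv (\<lambda>s. f (X + s *\<^sub>R axis k 1)) 0"

definition christoffel :: "(real^4 \<Rightarrow> real^4^4) \<Rightarrow> 4 \<Rightarrow> 4 \<Rightarrow> 4 \<Rightarrow> real^4 \<Rightarrow> real" where
  "christoffel g l m n X = (1/2) * (\<Sum>s\<in>UNIV. matrix_inv (g X) $ l $ s *
      (pd (\<lambda>Y. g Y $ s $ n) m X + pd (\<lambda>Y. g Y $ s $ m) n X - pd (\<lambda>Y. g Y $ m $ n) s X))"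

text \<open>Ricci tensor, Landau-Lifshitz convention.\<close>
definition ricci :: "(real^4 \<Rightarrow> real^4^4) \<Rightarrow> 4 \<Rightarrow> 4 \<Rightarrow> real^4 \<Rightarrow> real" where
  "ricci g m n X =
     (\<Sum>l\<in>UNIV. pd (christoffel g l m n) l X)
   - (\<Sum>l\<in>UNIV. pd (christoffel g l m l) n X)
   + (\<Sum>l\<in>UNIV. \<Sum>s\<in>UNIV. christoffel g l m n X * christoffel g s l s X)
   - (\<Sum>l\<in>UNIV. \<Sum>s\<in>UNIV. christoffel g s m l X * christoffel g l n s X)"

definition mixed_ricci :: "(real^4 \<Rightarrow> real^4^4) \<Rightarrow> 4 \<Rightarrow> 4 \<Rightarrow> real^4 \<Rightarrow> real" where
  "mixed_ricci g m n X = (\<Sum>a\<in>UNIV. matrix_inv (g X) $ m $ a * ricci g a n X)"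

definition scalar_curv :: "(real^4 \<Rightarrow> real^4^4) \<Rightarrow> real^4 \<Rightarrow> real" where
  "scalar_curv g X = (\<Sum>m\<in>UNIV. mixed_ricci g m m X)"

definition einstein_mixed :: "(real^4 \<Rightarrow> real^4^4) \<Rightarrow> 4 \<Rightarrow> 4 \<Rightarrow> real^4 \<Rightarrow> real" where
  "einstein_mixed g m n X = mixed_ricci g m n X - (1/2) * scalar_curv g X * (if m = n then 1 else 0)"

definition sint :: "real \<Rightarrow> real \<Rightarrow> (real \<Rightarrow> real) \<Rightarrow> real" where
  "sint a b f = (if a \<le> b then integral {a..b} f else - integral {b..a} f)"

definition phid :: "(real \<Rightarrow> real) \<Rightarrow> (real \<Rightarrow> real) \<Rightarrow> (real \<Rightarrow> real) \<Rightarrow> real \<Rightarrow> real \<Rightarrow> real \<Rightarrow> real" where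
  "phid rho p dp z1 z2 w = (w - z2) / (w - z1) * p w /
      ((w - z1) * (rho w - p w) + (z2 - z1) * (rho w + 7 * p w - 4 * dp w))"

definition phi :: "(real \<Rightarrow> real) \<Rightarrow> (real \<Rightarrow> real) \<Rightarrow> (real \<Rightarrow> real) \<Rightarrow> real \<Rightarrow> real \<Rightarrow> real \<Rightarrow> real" where
  "phi rho p dp z1 z2 z = sint 0 z (phid rho p dp z1 z2)"

definition the_metric :: "(real \<Rightarrow> real) \<Rightarrow> (real \<Rightarrow> real) \<Rightarrow> (real \<Rightarrow> real) \<Rightarrow> real \<Rightarrow> real \<Rightarrow> real^4 \<Rightarrow> real^4^4" where
  "the_metric rho p dp z1 z2 X = (let z = X $ 3 in
     (\<chi> i j. if i \<noteq> j then 0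
       else if i = 0 then exp (2 * phi rho p dp z1 z2 z)
       else if i = 3 then - (4 * (z2 - z1) * (z - z1) / (z - z2)^2 * (phid rho p dp z1 z2 z)^2 / p z)
       else - exp (4 * (z2 - z1) * sint 0 z (\<lambda>w. phid rho p dp z1 z2 w / (w - z2)))))"

definition the_emt :: "(real \<Rightarrow> real) \<Rightarrow> (real \<Rightarrow> real) \<Rightarrow> (real \<Rightarrow> real) \<Rightarrow> real^4 \<Rightarrow> real^4^4" where
  "the_emt rho p dp X = (let z = X $ 3 in
     (\<chi> i j. if i \<noteq> j then 0
       else if i = 0 then rho z
       else if i = 3 then - p z
       else - (p z - dp z)))"

end

theory Submission
  imports Defs
begin

text \<open>The metric is diagonal and depends on z alone, so its Christoffel symbols, Ricci
  tensor and Einstein tensor reduce to ordinary derivatives in z of the diagonal entries.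
  For ds^2 = A dt^2 - B (dx^2 + dy^2) - C dz^2 with A' = 2 \<alpha> A and B' = 2 \<beta> B the mixed
  Einstein tensor is an explicit expression in \<alpha>, \<beta>, C and their first derivatives.
  Here \<alpha> = \<phi>' and \<beta> = 2 (z2 - z1) \<phi>' / (z - z2); substituting the definitions of \<phi>' and C
  and the conservation law, rewritten as p' = - \<phi>' (\<rho> + p + 4 (z2 - z1) \<delta>p / (z - z2)),
  turns the diagonal components into \<rho>, - p_parallel and - p.\<close>

section \<open>Diagonal metrics depending only on z\<close>

definition diag_mat :: "('n \<Rightarrow> 'a::zero) \<Rightarrow> 'a^'n^'n" where
  "diag_mat d = (\<chi> i j. if i = j then d i else 0)"

lemma diag_mat_mult:
  fixes d e :: "'n::finite \<Rightarrow> 'a::semiring_1"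
  shows "diag_mat d ** diag_mat e = diag_mat (\<lambda>i. d i * e i)"
  by (simp add: diag_mat_def matrix_matrix_mult_def vec_eq_iff if_distrib[of "\<lambda>x. x * _"]
      sum.delta cong: if_cong)

lemma mat_1_eq_diag_mat: "mat 1 = diag_mat (\<lambda>_. 1)"
  by (simp add: mat_def diag_mat_def)

lemma matrix_inv_unique:
  fixes A B :: "'a::semiring_1^'n^'n"
  assumes "A ** B = mat 1" "B ** A = mat 1"
  shows "matrix_inv A = B"
proof -
  have "A ** matrix_inv A = mat 1 \<and> matrix_inv A ** A = mat 1"
    unfolding matrix_inv_def by (rule someI[of _ B]) (use assms in blast)
  then have "matrix_inv A = matrix_inv A ** (A ** B)"
    by (simp add: assms matrix_mul_rid)
  also have "\<dots> = B"
    using \<open>A ** matrix_inv A = mat 1 \<and> _\<close> by (simp add: matrix_mul_assoc matrix_mul_lid)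
  finally show ?thesis .
qed

lemma matrix_inv_diag_mat:
  fixes d :: "'n::finite \<Rightarrow> 'a::field"
  assumes "\<And>i. d i \<noteq> 0"
  shows "matrix_inv (diag_mat d) = diag_mat (\<lambda>i. inverse (d i))"
  by (rule matrix_inv_unique) (simp_all add: diag_mat_mult mat_1_eq_diag_mat assms)

lemma cases_4: "(x::4) = 0 \<or> x = 1 \<or> x = 2 \<or> x = 3"
  using exhaust_4[of x] by auto

lemma sum_UNIV_4: "sum f (UNIV::4 set) = f 0 + f 1 + f 2 + f 3"
proof -
  have "f (4::4) = f 0" by (rule arg_cong[where f=f]) simp
  then show ?thesis using sum_4[of f] by (simp add: ac_simps)
qed

lemma deriv_eq_on_open:
  assumes "open I" "z \<in> I" "\<And>w. w \<in> I \<Longrightarrow> F w = G w" "(G has_real_derivative D) (at z)"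
  shows "deriv F z = D"
  using assms by (metis DERIV_imp_deriv has_field_derivative_transform_within_open)

lemma pd_function_of_z:
  assumes "open I" "X $ 3 \<in> I" and F: "\<And>Y. Y $ 3 \<in> I \<Longrightarrow> F Y = h (Y $ 3)"
  shows "pd F k X = (if k = 3 then deriv h (X $ 3) else 0)"
proof (cases "k = 3")
  case True
  have "((\<lambda>s. X $ 3 + s) \<longlongrightarrow> X $ 3) (nhds 0)"
    using tendsto_add[OF tendsto_const[of "X $ 3"] filterlim_ident[of "nhds (0::real)"]] by simp
  then have "\<forall>\<^sub>F s in nhds 0. X $ 3 + s \<in> I"
    using assms(1,2) by (rule topological_tendstoD)
  then have "\<forall>\<^sub>F s in nhds 0. F (X + s *\<^sub>R axis k 1) = (h \<circ> (\<lambda>s. X $ 3 + s)) s"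
    by eventually_elim (simp add: F True axis_def)
  then have "pd F k X = deriv (h \<circ> (\<lambda>s. X $ 3 + s)) 0"
    unfolding pd_def by (rule deriv_cong_ev) simp
  then show ?thesis by (simp add: True deriv_shift_0[symmetric])
next
  case False
  then have "F (X + s *\<^sub>R axis k 1) = h (X $ 3)" for s
    using assms(2) by (simp add: F axis_def)
  then show ?thesis by (simp add: pd_def False)
qed

definition z_diag_metric :: "(4 \<Rightarrow> real \<Rightarrow> real) \<Rightarrow> real^4 \<Rightarrow> real^4^4" where
  "z_diag_metric E Y = diag_mat (\<lambda>i. E i (Y $ 3))"

definition christoffel_diag :: "(4 \<Rightarrow> real \<Rightarrow> real) \<Rightarrow> 4 \<Rightarrow> 4 \<Rightarrow> 4 \<Rightarrow> real \<Rightarrow> real" where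
  "christoffel_diag E l m n z = 1 / (2 * E l z) *
     ((if m = 3 \<and> l = n then deriv (E n) z else 0) + (if n = 3 \<and> l = m then deriv (E m) z else 0)
      - (if l = 3 \<and> m = n then deriv (E m) z else 0))"

lemma christoffel_diag_eq_0:
  "\<not> ((m = 3 \<and> l = n) \<or> (n = 3 \<and> l = m) \<or> (l = 3 \<and> m = n)) \<Longrightarrow> christoffel_diag E l m n = (\<lambda>z. 0)"
  by (auto simp: christoffel_diag_def fun_eq_iff)

lemma pd_z_diag_metric:
  "pd (\<lambda>Y. z_diag_metric E Y $ i $ j) k X =
     (if k = 3 \<and> i = j then deriv (E i) (X $ 3) else 0)"
  by (subst pd_function_of_z[of UNIV _ _ "\<lambda>z. if i = j then E i z else 0"])
     (auto simp: z_diag_metric_def diag_mat_def)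

lemma matrix_inv_z_diag_metric:
  "(\<And>i. E i (X $ 3) \<noteq> 0) \<Longrightarrow>
    matrix_inv (z_diag_metric E X) = diag_mat (\<lambda>i. inverse (E i (X $ 3)))"
  by (simp add: z_diag_metric_def matrix_inv_diag_mat)

lemma christoffel_z_diag_metric:
  assumes "\<And>i. E i (X $ 3) \<noteq> 0"
  shows "christoffel (z_diag_metric E) l m n X = christoffel_diag E l m n (X $ 3)"
  using assms unfolding christoffel_def pd_z_diag_metric
  by (simp add: matrix_inv_z_diag_metric diag_mat_def if_distrib[of "\<lambda>x. x * _"] sum.delta
      cong: if_cong)
    (auto simp: christoffel_diag_def field_simps)

definition ricci_diag :: "(4 \<Rightarrow> real \<Rightarrow> real) \<Rightarrow> 4 \<Rightarrow> 4 \<Rightarrow> real \<Rightarrow> real" where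
  "ricci_diag E m n z = deriv (christoffel_diag E 3 m n) z
     - (if n = 3 then \<Sum>l\<in>UNIV. deriv (christoffel_diag E l m l) z else 0)
     + (\<Sum>l\<in>UNIV. \<Sum>s\<in>UNIV. christoffel_diag E l m n z * christoffel_diag E s l s z)
     - (\<Sum>l\<in>UNIV. \<Sum>s\<in>UNIV. christoffel_diag E s m l z * christoffel_diag E l n s z)"

lemma ricci_z_diag_metric:
  assumes "open I" "X $ 3 \<in> I" and nonzero: "\<And>w i. w \<in> I \<Longrightarrow> E i w \<noteq> 0"
  shows "ricci (z_diag_metric E) m n X = ricci_diag E m n (X $ 3)"
proof -
  have "pd (christoffel (z_diag_metric E) l m' n') k X =
      (if k = 3 then deriv (christoffel_diag E l m' n') (X $ 3) else 0)" for l m' n' k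
    by (rule pd_function_of_z[OF assms(1,2)]) (simp add: christoffel_z_diag_metric nonzero)
  then show ?thesis
    using assms(2) unfolding ricci_def ricci_diag_def
    by (cases "n = 3") (simp_all add: christoffel_z_diag_metric nonzero)
qed

lemma einstein_mixed_z_diag_metric:
  assumes "open I" "X $ 3 \<in> I" and nonzero: "\<And>w i. w \<in> I \<Longrightarrow> E i w \<noteq> 0"
  shows "einstein_mixed (z_diag_metric E) m n X = ricci_diag E m n (X $ 3) / E m (X $ 3)
     - (\<Sum>k\<in>UNIV. ricci_diag E k k (X $ 3) / E k (X $ 3)) / 2 * (if m = n then 1 else 0)"
proof -
  have "mixed_ricci (z_diag_metric E) m' n' X = ricci_diag E m' n' (X $ 3) / E m' (X $ 3)" for m' n'
    using assms(2) unfolding mixed_ricci_def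
    by (simp add: ricci_z_diag_metric[OF assms] matrix_inv_z_diag_metric nonzero diag_mat_def
        divide_inverse if_distrib[of "\<lambda>x. x * _"] sum.delta cong: if_cong)
  then show ?thesis
    by (simp add: einstein_mixed_def scalar_curv_def)
qed

section \<open>Plane-symmetric metrics\<close>

definition plane_symmetric ::
    "(real \<Rightarrow> real) \<Rightarrow> (real \<Rightarrow> real) \<Rightarrow> (real \<Rightarrow> real) \<Rightarrow> 4 \<Rightarrow> real \<Rightarrow> real" where
  "plane_symmetric A B C i z = (if i = 0 then A z else if i = 3 then - C z else - B z)"

text \<open>The mixed Einstein tensor of A dt^2 - B (dx^2 + dy^2) - C dz^2 in terms of
  a = A' / (2 A), b = B' / (2 B), their derivatives a', b', and c = C, c' = C'.\<close>

definition plane_einstein :: "real \<Rightarrow> real \<Rightarrow> real \<Rightarrow> real \<Rightarrow> real \<Rightarrow> real \<Rightarrow> 4 \<Rightarrow> 4 \<Rightarrow> real" where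
  "plane_einstein a a' b b' c c' m n =
    (if m \<noteq> n then 0
     else if m = 0 then (- 2 * b' - 3 * b\<^sup>2 + c' / c * b) / c
     else if m = 3 then - (b\<^sup>2 + 2 * a * b) / c
     else (- a' - b' - b\<^sup>2 - a * b - a\<^sup>2 + c' / (2 * c) * (a + b)) / c)"

locale plane_symmetric_metric =
  fixes I :: "real set" and A B C \<alpha> \<beta> C' :: "real \<Rightarrow> real"
  assumes open_I: "open I"
    and has_real_derivative_A: "\<And>w. w \<in> I \<Longrightarrow> (A has_real_derivative 2 * \<alpha> w * A w) (at w)"
    and has_real_derivative_B: "\<And>w. w \<in> I \<Longrightarrow> (B has_real_derivative 2 * \<beta> w * B w) (at w)"
    and has_real_derivative_C: "\<And>w. w \<in> I \<Longrightarrow> (C has_real_derivative C' w) (at w)"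
    and nonzero: "\<And>w. w \<in> I \<Longrightarrow> A w \<noteq> 0" "\<And>w. w \<in> I \<Longrightarrow> B w \<noteq> 0"
      "\<And>w. w \<in> I \<Longrightarrow> C w \<noteq> 0"
begin

abbreviation \<Gamma> :: "4 \<Rightarrow> 4 \<Rightarrow> 4 \<Rightarrow> real \<Rightarrow> real" where
  "\<Gamma> \<equiv> christoffel_diag (plane_symmetric A B C)"

lemma christoffel_diag_eq:
  assumes "w \<in> I"
  shows "\<Gamma> 3 0 0 w = \<alpha> w * A w / C w"
    "\<Gamma> 3 1 1 w = - (\<beta> w * B w / C w)" "\<Gamma> 3 2 2 w = - (\<beta> w * B w / C w)"
    "\<Gamma> 0 3 0 w = \<alpha> w" "\<Gamma> 0 0 3 w = \<alpha> w"
    "\<Gamma> 1 3 1 w = \<beta> w" "\<Gamma> 1 1 3 w = \<beta> w" "\<Gamma> 2 3 2 w = \<beta> w" "\<Gamma> 2 2 3 w = \<beta> w"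
    "\<Gamma> 3 3 3 w = C' w / (2 * C w)"
proof -
  have E: "plane_symmetric A B C 0 = A" "plane_symmetric A B C 1 = (\<lambda>w. - B w)"
    "plane_symmetric A B C 2 = (\<lambda>w. - B w)" "plane_symmetric A B C 3 = (\<lambda>w. - C w)"
    by (simp_all add: plane_symmetric_def fun_eq_iff)
  have dE: "deriv (\<lambda>w. - B w) w = - (2 * \<beta> w * B w)" "deriv (\<lambda>w. - C w) w = - C' w"
    "deriv A w = 2 * \<alpha> w * A w"
    using assms
    by (auto intro!: DERIV_imp_deriv derivative_eq_intros has_real_derivative_A
        has_real_derivative_B has_real_derivative_C)
  show "\<Gamma> 3 0 0 w = \<alpha> w * A w / C w"
    "\<Gamma> 3 1 1 w = - (\<beta> w * B w / C w)" "\<Gamma> 3 2 2 w = - (\<beta> w * B w / C w)"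
    "\<Gamma> 0 3 0 w = \<alpha> w" "\<Gamma> 0 0 3 w = \<alpha> w"
    "\<Gamma> 1 3 1 w = \<beta> w" "\<Gamma> 1 1 3 w = \<beta> w" "\<Gamma> 2 3 2 w = \<beta> w" "\<Gamma> 2 2 3 w = \<beta> w"
    "\<Gamma> 3 3 3 w = C' w / (2 * C w)"
    using nonzero[OF assms] by (simp_all add: christoffel_diag_def E dE field_simps)
qed

lemma einstein_mixed_eq_plane_einstein:
  assumes zI: "X $ 3 \<in> I" and "(\<alpha> has_real_derivative \<alpha>') (at (X $ 3))"
    and "(\<beta> has_real_derivative \<beta>') (at (X $ 3))"
  shows "einstein_mixed (z_diag_metric (plane_symmetric A B C)) m n X =
    plane_einstein (\<alpha> (X $ 3)) \<alpha>' (\<beta> (X $ 3)) \<beta>' (C (X $ 3)) (C' (X $ 3)) m n"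
proof -
  define z where "z = X $ 3"
  have z: "z \<in> I" "(\<alpha> has_real_derivative \<alpha>') (at z)" "(\<beta> has_real_derivative \<beta>') (at z)"
    using assms by (simp_all add: z_def)
  note dA = has_real_derivative_A[OF z(1)] and dB = has_real_derivative_B[OF z(1)]
    and dC = has_real_derivative_C[OF z(1)] and deriv_eq = deriv_eq_on_open[OF open_I z(1)]
  have d\<Gamma>300: "deriv (\<Gamma> 3 0 0) z =
      ((\<alpha>' * A z + 2 * \<alpha> z * A z * \<alpha> z) * C z - \<alpha> z * A z * C' z) / (C z * C z)"
    using nonzero(3)[OF z(1)]
    by (intro deriv_eq[OF christoffel_diag_eq(1)] DERIV_divide[OF DERIV_mult[OF z(2) dA] dC])
  have d\<Gamma>311: "deriv (\<Gamma> 3 1 1) z =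
      - (((\<beta>' * B z + 2 * \<beta> z * B z * \<beta> z) * C z - \<beta> z * B z * C' z) / (C z * C z))"
    using nonzero(3)[OF z(1)]
    by (intro deriv_eq[OF christoffel_diag_eq(2)] DERIV_minus
        DERIV_divide[OF DERIV_mult[OF z(3) dB] dC])
  have d\<Gamma>322: "deriv (\<Gamma> 3 2 2) z =
      - (((\<beta>' * B z + 2 * \<beta> z * B z * \<beta> z) * C z - \<beta> z * B z * C' z) / (C z * C z))"
    using nonzero(3)[OF z(1)]
    by (intro deriv_eq[OF christoffel_diag_eq(3)] DERIV_minus
        DERIV_divide[OF DERIV_mult[OF z(3) dB] dC])
  have d\<Gamma>030: "deriv (\<Gamma> 0 3 0) z = \<alpha>'"
    by (rule deriv_eq[OF christoffel_diag_eq(4) z(2)])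
  have d\<Gamma>131: "deriv (\<Gamma> 1 3 1) z = \<beta>'"
    by (rule deriv_eq[OF christoffel_diag_eq(6) z(3)])
  have d\<Gamma>232: "deriv (\<Gamma> 2 3 2) z = \<beta>'"
    by (rule deriv_eq[OF christoffel_diag_eq(8) z(3)])
  have E_nonzero: "w \<in> I \<Longrightarrow> plane_symmetric A B C i w \<noteq> 0" for i w
    using nonzero[of w] by (simp add: plane_symmetric_def)
  have "m = 0 \<or> m = 1 \<or> m = 2 \<or> m = 3" "n = 0 \<or> n = 1 \<or> n = 2 \<or> n = 3"
    by (rule cases_4)+
  then show ?thesis
    unfolding z_def[symmetric] plane_einstein_def
    apply (elim disjE)
     apply (simp_all add: einstein_mixed_z_diag_metric[OF open_I zI] E_nonzero z_def[symmetric]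
        ricci_diag_def sum_UNIV_4 christoffel_diag_eq[OF z(1)] christoffel_diag_eq_0
        d\<Gamma>300 d\<Gamma>311 d\<Gamma>322 d\<Gamma>030 d\<Gamma>131 d\<Gamma>232)
     apply (simp_all add: plane_symmetric_def nonzero[OF z(1)] field_simps power2_eq_square)
    done
qed

end

text \<open>At a point z: u = z - z1, v = z - z2, w = z2 - z1, f = \<phi>'(z), and r, pp, d are
  \<rho>, p, \<delta>p at z.\<close>

context
  fixes u v w r pp d f f' p' C C' :: real
  assumes nonzero: "u \<noteq> 0" "v \<noteq> 0" "w \<noteq> 0" "pp \<noteq> 0" "f \<noteq> 0"
    and u_eq: "u = v + w"
    and phid_eq: "v * pp = u * f * (u * (r - pp) + w * (r + 7 * pp - 4 * d))"
    and pressure_gradient: "p' = - f * (r + pp + 4 * w * d / v)"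
    and C_eq: "C = 4 * w * u / v\<^sup>2 * f\<^sup>2 / pp"
    and C'_eq: "C' = C * (1 / u - 2 / v + 2 * f' / f - p' / pp)"
begin

private lemma C_nonzero: "C \<noteq> 0"
  using nonzero by (simp add: C_eq)

lemma plane_einstein_time_time:
  "plane_einstein f f' (2 * w * (f / v)) (2 * w * ((f' * v - f) / v\<^sup>2)) C C' 0 0 = r"
proof -
  have "- 2 * (2 * w * ((f' * v - f) / v\<^sup>2)) - 3 * (2 * w * (f / v))\<^sup>2 + C' / C * (2 * w * (f / v))
      = 2 * w * f / (u * v) + 2 * w * f\<^sup>2 * (r + pp + 4 * w * d / v) / (v * pp)
        - 12 * w\<^sup>2 * f\<^sup>2 / v\<^sup>2"
    unfolding C'_eq pressure_gradient using nonzero C_nonzero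
    by (simp add: field_simps power2_eq_square)
  also have "\<dots> = 2 * w * f / (u * v\<^sup>2 * pp) *
      (v * pp + f * u * (v * (r + pp) + 4 * w * d) - 6 * w * f * u * pp)"
    using nonzero by (simp add: field_simps power2_eq_square)
  also have "v * pp + f * u * (v * (r + pp) + 4 * w * d) - 6 * w * f * u * pp = 2 * u\<^sup>2 * f * r"
    unfolding phid_eq u_eq by (simp add: algebra_simps power2_eq_square)
  also have "2 * w * f / (u * v\<^sup>2 * pp) * (2 * u\<^sup>2 * f * r) = r * C"
    unfolding C_eq using nonzero by (simp add: field_simps power2_eq_square)
  finally show ?thesis
    using C_nonzero by (simp add: plane_einstein_def)
qed

lemma plane_einstein_parallel:
  assumes "m \<noteq> 0" "m \<noteq> 3"
  shows "plane_einstein f f' (2 * w * (f / v)) (2 * w * ((f' * v - f) / v\<^sup>2)) C C' m m = - (pp - d)"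
proof -
  let ?b = "2 * w * (f / v)"
  have "- f' - 2 * w * ((f' * v - f) / v\<^sup>2) - ?b\<^sup>2 - f * ?b - f\<^sup>2 + C' / (2 * C) * (f + ?b)
      = 2 * w * f / v\<^sup>2 - ?b\<^sup>2 - ?b * f - f\<^sup>2
        + (1 / u - 2 / v + f * (r + pp + 4 * w * d / v) / pp) * (f + ?b) / 2"
    unfolding C'_eq pressure_gradient using nonzero C_nonzero
    by (simp add: field_simps power2_eq_square)
  also have "\<dots> = f / (2 * u * v\<^sup>2 * pp) *
      (4 * w * u * pp - 8 * w\<^sup>2 * f * u * pp - 4 * w * f * v * u * pp - 2 * f * v\<^sup>2 * u * pp
       + (v * pp - 2 * u * pp + f * u * (v * (r + pp) + 4 * w * d)) * (v + 2 * w))"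
    using nonzero by (simp add: field_simps power2_eq_square)
  also have "4 * w * u * pp - 8 * w\<^sup>2 * f * u * pp - 4 * w * f * v * u * pp - 2 * f * v\<^sup>2 * u * pp
       + (v * pp - 2 * u * pp + f * u * (v * (r + pp) + 4 * w * d)) * (v + 2 * w)
      = 8 * w * u\<^sup>2 * f * (d - pp)"
    using phid_eq unfolding u_eq by algebra
  also have "f / (2 * u * v\<^sup>2 * pp) * (8 * w * u\<^sup>2 * f * (d - pp)) = - (pp - d) * C"
    unfolding C_eq using nonzero by (simp add: field_simps power2_eq_square)
  finally show ?thesis
    using assms C_nonzero by (simp add: plane_einstein_def)
qed

lemma plane_einstein_normal:
  "plane_einstein f f' (2 * w * (f / v)) (2 * w * ((f' * v - f) / v\<^sup>2)) C C' 3 3 = - pp"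
proof -
  have "(2 * w * (f / v))\<^sup>2 + 2 * f * (2 * w * (f / v)) = 4 * w * u * f\<^sup>2 / v\<^sup>2"
    unfolding u_eq using nonzero by (simp add: field_simps power2_eq_square)
  also have "\<dots> = pp * C"
    unfolding C_eq using nonzero by (simp add: field_simps)
  finally show ?thesis
    using C_nonzero by (simp add: plane_einstein_def)
qed

lemma plane_einstein_eq_source:
  "plane_einstein f f' (2 * w * (f / v)) (2 * w * ((f' * v - f) / v\<^sup>2)) C C' m n =
    (if m \<noteq> n then 0 else if m = 0 then r else if m = 3 then - pp else - (pp - d))"
  using plane_einstein_time_time plane_einstein_parallel plane_einstein_normal
  by (auto simp: plane_einstein_def)

end

section \<open>The metric generated by the source\<close>

lemma has_real_derivative_sint:
  fixes f :: "real \<Rightarrow> real"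
  assumes cont: "continuous_on {a<..<b} f" and "a < 0" "0 < b" "a < x" "x < b"
  shows "((\<lambda>z. sint 0 z f) has_real_derivative f x) (at x)"
proof -
  define c where "c = (a + min x 0) / 2"
  define d where "d = (b + max x 0) / 2"
  have cd: "a < c" "c < x" "c < 0" "x < d" "0 < d" "d < b"
    using assms by (auto simp: c_def d_def)
  have cont_cd: "continuous_on {c..d} f"
    using cont by (rule continuous_on_subset) (use cd in auto)
  have int: "f integrable_on {c..d}"
    using cont_cd by (rule integrable_continuous_real)
  have "((\<lambda>z. integral {c..z} f - integral {c..0} f) has_real_derivative f x) (at x)"
    using integral_has_real_derivative[OF cont_cd, of x] cd
    by (auto simp: at_within_Icc_at intro!: derivative_eq_intros)
  then show ?thesis
  proof (rule has_field_derivative_transform_within_open)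
    fix z assume z: "z \<in> {c<..<d}"
    show "integral {c..z} f - integral {c..0} f = sint 0 z f"
    proof (cases "0 \<le> z")
      case True
      have "integral {c..0} f + integral {0..z} f = integral {c..z} f"
        by (rule Henstock_Kurzweil_Integration.integral_combine)
          (use cd True z in \<open>auto intro: integrable_subinterval_real[OF int]\<close>)
      then show ?thesis using True by (simp add: sint_def)
    next
      case False
      have "integral {c..z} f + integral {z..0} f = integral {c..0} f"
        by (rule Henstock_Kurzweil_Integration.integral_combine)
          (use cd False z in \<open>auto intro: integrable_subinterval_real[OF int]\<close>)
      then show ?thesis using False by (simp add: sint_def)
    qed
  qed (use cd in auto)
qed

lemma has_real_derivative_exp_sint:
  fixes h :: "real \<Rightarrow> real"
  assumes "continuous_on {a<..<b} h" "a < 0" "0 < b" "a < x" "x < b"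
  shows "((\<lambda>z. exp (k * sint 0 z h)) has_real_derivative k * h x * exp (k * sint 0 x h)) (at x)"
  using has_real_derivative_sint[OF assms] by (auto intro!: derivative_eq_intros)

lemma phid_nonzeroD:
  assumes "phid rho p dp z1 z2 w \<noteq> 0"
  shows "w \<noteq> z1" "w \<noteq> z2" "p w \<noteq> 0"
    "(w - z1) * (rho w - p w) + (z2 - z1) * (rho w + 7 * p w - 4 * dp w) \<noteq> 0"
  using assms by (auto simp: phid_def)

lemma phid_differentiable:
  assumes "rho differentiable (at w)" "p differentiable (at w)" "dp differentiable (at w)"
    and "phid rho p dp z1 z2 w \<noteq> 0"
  shows "phid rho p dp z1 z2 differentiable (at w)"
  using assms phid_nonzeroD[OF assms(4)] unfolding phid_def[abs_def]
  by (auto intro!: derivative_intros)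

lemma has_real_derivative_dz_coeff:
  fixes f p :: "real \<Rightarrow> real"
  assumes "(f has_real_derivative f') (at z)" "(p has_real_derivative p') (at z)"
    and "z \<noteq> z1" "z \<noteq> z2" "f z \<noteq> 0" "p z \<noteq> 0"
  shows "((\<lambda>w. k * (w - z1) / (w - z2)\<^sup>2 * (f w)\<^sup>2 / p w) has_real_derivative
    k * (z - z1) / (z - z2)\<^sup>2 * (f z)\<^sup>2 / p z *
      (1 / (z - z1) - 2 / (z - z2) + 2 * f' / f z - p' / p z)) (at z)"
proof -
  \<comment> \<open>Naming the differences keeps field_simps from multiplying them out.\<close>
  define u v where "u = z - z1" and "v = z - z2"
  have nonzero: "u \<noteq> 0" "v \<noteq> 0" using assms(3,4) by (simp_all add: u_def v_def)
  have z1: "z1 = z - u" and z2: "z2 = z - v" by (simp_all add: u_def v_def)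
  show ?thesis
    unfolding z1 z2 using assms(1,2,5,6) nonzero
    by (auto intro!: derivative_eq_intros) (simp add: field_simps power2_eq_square)
qed

lemma the_emt_entry:
  "the_emt rho p dp X $ m $ n =
    (if m \<noteq> n then 0 else if m = 0 then rho (X $ 3) else if m = 3 then - p (X $ 3)
     else - (p (X $ 3) - dp (X $ 3)))"
  by (simp add: the_emt_def Let_def)

locale plane_symmetric_source =
  fixes rho p dp :: "real \<Rightarrow> real" and z1 z2 \<delta> :: real
  assumes z1_less_z2: "z1 < z2" and \<delta>_pos: "\<delta> > 0"
    and differentiable: "\<And>w. w \<in> {-\<delta><..<\<delta>} \<Longrightarrow> rho differentiable (at w) \<and> dp differentiable (at w)"
    and phid_continuous: "continuous_on {-\<delta><..<\<delta>} (phid rho p dp z1 z2)"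
    and phid_nonzero: "\<And>w. w \<in> {-\<delta><..<\<delta>} \<Longrightarrow> phid rho p dp z1 z2 w \<noteq> 0"
    and conservation: "\<And>w. w \<in> {-\<delta><..<\<delta>} \<Longrightarrow> (p has_real_derivative
           (- (((w - z2) * (rho w + p w) + 4 * (z2 - z1) * dp w) /
               ((w - z1) * (rho w - p w) + (z2 - z1) * (rho w + 7 * p w - 4 * dp w)))
            * p w / (w - z1))) (at w)"
begin

abbreviation I :: "real set" where "I \<equiv> {-\<delta><..<\<delta>}"

abbreviation \<phi>' :: "real \<Rightarrow> real" where "\<phi>' \<equiv> phid rho p dp z1 z2"

definition \<psi>' :: "real \<Rightarrow> real" where "\<psi>' w = \<phi>' w / (w - z2)"

definition C :: "real \<Rightarrow> real" where
  "C w = 4 * (z2 - z1) * (w - z1) / (w - z2)\<^sup>2 * (\<phi>' w)\<^sup>2 / p w"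

definition p' :: "real \<Rightarrow> real" where
  "p' w = - (((w - z2) * (rho w + p w) + 4 * (z2 - z1) * dp w) /
     ((w - z1) * (rho w - p w) + (z2 - z1) * (rho w + 7 * p w - 4 * dp w))) * p w / (w - z1)"

definition C' :: "real \<Rightarrow> real" where
  "C' w = C w * (1 / (w - z1) - 2 / (w - z2) + 2 * deriv \<phi>' w / \<phi>' w - p' w / p w)"

lemmas nonzero = phid_nonzeroD[OF phid_nonzero]

lemma C_nonzero: "w \<in> I \<Longrightarrow> C w \<noteq> 0"
  using nonzero[of w] phid_nonzero[of w] z1_less_z2 by (simp add: C_def)

lemma has_real_derivative_p: "w \<in> I \<Longrightarrow> (p has_real_derivative p' w) (at w)"
  using conservation by (simp add: p'_def)

lemma has_real_derivative_phid:
  assumes "w \<in> I"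
  shows "(\<phi>' has_real_derivative deriv \<phi>' w) (at w)"
proof -
  have "p differentiable (at w)"
    using has_real_derivative_p[OF assms] real_differentiable_def by blast
  then have "\<phi>' differentiable (at w)"
    using differentiable[OF assms] phid_nonzero[OF assms] by (intro phid_differentiable) auto
  then show ?thesis by (simp add: DERIV_deriv_iff_real_differentiable)
qed

lemma has_real_derivative_psid:
  "w \<in> I \<Longrightarrow> (\<psi>' has_real_derivative (deriv \<phi>' w * (w - z2) - \<phi>' w) / (w - z2)\<^sup>2) (at w)"
  unfolding \<psi>'_def[abs_def] using has_real_derivative_phid[of w] nonzero(2)[of w]
  by (auto intro!: derivative_eq_intros simp: power2_eq_square)

lemma continuous_on_psid: "continuous_on I \<psi>'"
  unfolding \<psi>'_def[abs_def] using nonzero(2) by (intro continuous_intros phid_continuous) auto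

lemma has_real_derivative_C: "w \<in> I \<Longrightarrow> (C has_real_derivative C' w) (at w)"
  unfolding C'_def C_def[abs_def] using nonzero[of w] phid_nonzero[of w]
  by (intro has_real_derivative_dz_coeff has_real_derivative_phid has_real_derivative_p) auto

lemma phid_times_denominator:
  assumes "w \<in> I"
  shows "(w - z2) * p w =
    (w - z1) * \<phi>' w * ((w - z1) * (rho w - p w) + (z2 - z1) * (rho w + 7 * p w - 4 * dp w))"
proof -
  have "v * q = u * (v / u * q / D) * D" if "u \<noteq> 0" "D \<noteq> 0" for u v q D :: real
    using that by simp
  then show ?thesis
    using nonzero[OF assms] unfolding phid_def by simp
qed

lemma p'_eq:
  assumes "w \<in> I"
  shows "p' w = - \<phi>' w * (rho w + p w + 4 * (z2 - z1) * dp w / (w - z2))"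
proof -
  have *: "- ((v * (r + q) + 4 * k * d) / D) * q / u = - (v / u * q / D) * (r + q + 4 * k * d / v)"
    if "u \<noteq> 0" "v \<noteq> 0" "D \<noteq> 0" for u v q D r k d :: real
    using that by (simp add: field_simps)
  show ?thesis
    unfolding p'_def phid_def by (rule *) (use nonzero[OF assms] in auto)
qed

lemma the_metric_eq: "the_metric rho p dp z1 z2 = z_diag_metric (plane_symmetric
    (\<lambda>z. exp (2 * sint 0 z \<phi>')) (\<lambda>z. exp (4 * (z2 - z1) * sint 0 z \<psi>')) C)"
  by (auto simp: the_metric_def z_diag_metric_def diag_mat_def plane_symmetric_def phi_def
      \<psi>'_def[abs_def] C_def Let_def fun_eq_iff vec_eq_iff)

lemma einstein_mixed_the_metric:
  assumes "X $ 3 \<in> I"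
  shows "einstein_mixed (the_metric rho p dp z1 z2) m n X =
    plane_einstein (\<phi>' (X $ 3)) (deriv \<phi>' (X $ 3)) (2 * (z2 - z1) * \<psi>' (X $ 3))
      (2 * (z2 - z1) * ((deriv \<phi>' (X $ 3) * (X $ 3 - z2) - \<phi>' (X $ 3)) / (X $ 3 - z2)\<^sup>2))
      (C (X $ 3)) (C' (X $ 3)) m n"
proof -
  interpret metric: plane_symmetric_metric I "\<lambda>z. exp (2 * sint 0 z \<phi>')"
    "\<lambda>z. exp (4 * (z2 - z1) * sint 0 z \<psi>')" C \<phi>' "\<lambda>w. 2 * (z2 - z1) * \<psi>' w" C'
  proof unfold_locales
    show "((\<lambda>z. exp (2 * sint 0 z \<phi>')) has_real_derivative
        2 * \<phi>' w * exp (2 * sint 0 w \<phi>')) (at w)" if "w \<in> I" for w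
      using has_real_derivative_exp_sint[OF phid_continuous] that \<delta>_pos by simp
    show "((\<lambda>z. exp (4 * (z2 - z1) * sint 0 z \<psi>')) has_real_derivative
        2 * (2 * (z2 - z1) * \<psi>' w) * exp (4 * (z2 - z1) * sint 0 w \<psi>')) (at w)" if "w \<in> I" for w
      by (rule DERIV_cong[OF has_real_derivative_exp_sint[OF continuous_on_psid]])
        (use that \<delta>_pos in \<open>auto simp: algebra_simps\<close>)
  qed (simp_all add: has_real_derivative_C C_nonzero)
  show ?thesis
    unfolding the_metric_eq
  proof (rule metric.einstein_mixed_eq_plane_einstein[OF assms has_real_derivative_phid[OF assms]])
    show "((\<lambda>w. 2 * (z2 - z1) * \<psi>' w) has_real_derivative
        2 * (z2 - z1) * ((deriv \<phi>' (X $ 3) * (X $ 3 - z2) - \<phi>' (X $ 3)) / (X $ 3 - z2)\<^sup>2))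
        (at (X $ 3))"
      using has_real_derivative_psid[OF assms] by (auto intro!: derivative_eq_intros)
  qed
qed

lemma einstein_equations:
  assumes "\<bar>X $ 3\<bar> < \<delta>"
  shows "einstein_mixed (the_metric rho p dp z1 z2) m n X = the_emt rho p dp X $ m $ n"
proof -
  define z where "z = X $ 3"
  have zI: "z \<in> I" using assms by (auto simp: z_def)
  have "einstein_mixed (the_metric rho p dp z1 z2) m n X =
    plane_einstein (\<phi>' z) (deriv \<phi>' z) (2 * (z2 - z1) * (\<phi>' z / (z - z2)))
      (2 * (z2 - z1) * ((deriv \<phi>' z * (z - z2) - \<phi>' z) / (z - z2)\<^sup>2)) (C z) (C' z) m n"
    using einstein_mixed_the_metric zI by (simp add: z_def \<psi>'_def)
  also have "\<dots> = the_emt rho p dp X $ m $ n"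
    unfolding the_emt_entry z_def[symmetric]
    by (rule plane_einstein_eq_source[where u = "z - z1" and p' = "p' z"])
      (use nonzero[OF zI] phid_nonzero[OF zI] z1_less_z2 phid_times_denominator[OF zI] p'_eq[OF zI]
        in \<open>simp_all add: C_def C'_def\<close>)
  finally show ?thesis .
qed

end

theorem theorem1:
  fixes rho p dp :: "real \<Rightarrow> real" and z1 z2 \<delta> :: real
  assumes "z1 < z2" and "\<delta> > 0"
    and "\<forall>w\<in>{-\<delta><..<\<delta>}. rho differentiable (at w) \<and> dp differentiable (at w)"
    and "continuous_on {-\<delta><..<\<delta>} (phid rho p dp z1 z2)"
    and "\<forall>w\<in>{-\<delta><..<\<delta>}. phid rho p dp z1 z2 w \<noteq> 0"
    and "z1 * p 0 < 0"
    and "\<forall>w\<in>{-\<delta><..<\<delta>}. (p has_real_derivative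
           (- (((w - z2) * (rho w + p w) + 4 * (z2 - z1) * dp w) /
               ((w - z1) * (rho w - p w) + (z2 - z1) * (rho w + 7 * p w - 4 * dp w)))
            * p w / (w - z1))) (at w)"
  shows "\<exists>\<epsilon>>0. \<forall>X::real^4. \<bar>X $ 3\<bar> < \<epsilon> \<longrightarrow>
           (\<forall>m n. einstein_mixed (the_metric rho p dp z1 z2) m n X = the_emt rho p dp X $ m $ n)"
proof -
  \<comment> \<open>The hypothesis z1 * p 0 < 0 only makes - g_zz positive, i.e. fixes the signature; the
    field equations hold without it.\<close>
  interpret plane_symmetric_source rho p dp z1 z2 \<delta>
    using assms(1-5,7) by unfold_locales auto
  show ?thesis
    using \<delta>_pos einstein_equations by blast
qed

end
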